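(* Let $\mathbf D$ be a Condorcet super-domain, let $V$ be a finite set of odd cardinality, let $(T_v)_{v\in V}$ be a family of tilings with all $T_v\in\mathbf D$, and let $T=sm((T_v)_{v\in V})$. Then $\mathbf D\cup\{T\}$ is a Condorcet super-domain.
   Context: Fix an integer $n\ge 3$ and write $[n]=\{1,\dots,n\}$. Let $\Lambda$ be the set of 3-element subsets of $[n]$; a triple $\{i,j,k\}$ with $i<j<k$ is written $ijk$. For a 4-element subset $F=\{i<j<k<l\}$ of $[n]$, the stick of $F$ is the sequence $(ijk,\ ijl,\ ikl,\ jkl)$. A tiling (the inversion set of a rhombus tiling of the zonogon $Z(n;2)$) is a subset $T\subseteq\Lambda$ such that for every 4-element $F\subseteq[n]$, $T\cap\mathrm{stick}(F)$ is an initial segment or a final segment of the stick (empty set and whole stick allowed). For a finite set $V$ of odd cardinality and tilings $(T_v)_{v\in V}$, $sm((T_v)_{v\in V})$ is the set of triples lying in $T_v$ for more than $|V|/2$ indices $v$. A set $\mathbf D$ of tilings is a Condorcet super-domain if for every finite $V$ of odd cardinality and every family $(T_v)_{v\in V}$ with all $T_v\in\mathbf D$, $sm((T_v)_{v\in V})$ is a tiling. *)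

theory Defs
  imports Main
begin

definition Lambda :: "nat \<Rightarrow> nat set set" where
  "Lambda n = {t. t \<subseteq> {1..n} \<and> card t = 3}"

definition stick :: "nat \<Rightarrow> nat \<Rightarrow> nat \<Rightarrow> nat \<Rightarrow> nat set list" where
  "stick i j k l = [{i,j,k}, {i,j,l}, {i,k,l}, {j,k,l}]"

definition is_tiling :: "nat \<Rightarrow> nat set set \<Rightarrow> bool" where
  "is_tiling n T \<longleftrightarrow> T \<subseteq> Lambda n \<and>
     (\<forall>i j k l. 1 \<le> i \<and> i < j \<and> j < k \<and> k < l \<and> l \<le> n \<longrightarrow>
        (\<exists>m \<le> 4. T \<inter> set (stick i j k l) = set (take m (stick i j k l))
                 \<or> T \<inter> set (stick i j k l) = set (drop m (stick i j k l))))"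

definition sm :: "nat \<Rightarrow> 'v set \<Rightarrow> ('v \<Rightarrow> nat set set) \<Rightarrow> nat set set" where
  "sm n V T = {t \<in> Lambda n. 2 * card {v \<in> V. t \<in> T v} > card V}"

text \<open>Condorcet super-domain. Voter sets are quantified over finite sets of naturals;
  since sm depends only on the multiset of tilings, this is no loss of generality.\<close>
definition condorcet_super_domain :: "nat \<Rightarrow> nat set set set \<Rightarrow> bool" where
  "condorcet_super_domain n D \<longleftrightarrow> D \<subseteq> {T. is_tiling n T} \<and>
     (\<forall>(V::nat set) T. finite V \<and> odd (card V) \<and> (\<forall>v\<in>V. T v \<in> D) \<longrightarrow>
        is_tiling n (sm n V T))"

end

theory Submission
  imports Defs
begin

text \<open>
  Being a tiling is a condition on each stick separately: the memberships of its four triples must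
  not alternate along any three of them. Say that X lies in the pairwise hull of D if on any two
  triples X agrees with some member of D, i.e. X satisfies every 2-clause that holds throughout D.
  Simple majority preserves the pairwise hull, since the voters disagreeing with the majority on a
  triple s, and those disagreeing on t, are minorities and cannot cover the electorate. On the
  other hand, if a member X of the hull alternates on three triples of a stick, choose members of
  D agreeing with X on each pair of them; their three-voter majority agrees with X on all three
  triples, so it alternates too and D is not a Condorcet super-domain. Hence the pairwise hull of
  a Condorcet super-domain D is again one, and it contains both D and every majority of a profile
  from D.
\<close>

definition alternating :: "'a set \<Rightarrow> 'a list \<Rightarrow> bool" where
  "alternating A xs \<longleftrightarrow> (\<exists>x y z. x < y \<and> y < z \<and> z < length xs \<and>
     (xs ! x \<in> A) = (xs ! z \<in> A) \<and> (xs ! y \<in> A) \<noteq> (xs ! x \<in> A))"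

lemma nth_mem_set_take_iff:
  assumes "distinct xs" "q < length xs"
  shows "xs ! q \<in> set (take m xs) \<longleftrightarrow> q < m"
proof
  assume "xs ! q \<in> set (take m xs)"
  then obtain p where "p < length (take m xs)" "take m xs ! p = xs ! q"
    by (auto simp: in_set_conv_nth)
  with assms show "q < m" by (simp add: nth_eq_iff_index_eq)
next
  assume "q < m"
  with assms(2) show "xs ! q \<in> set (take m xs)"
    by (metis in_set_conv_nth length_take min_less_iff_conj nth_take)
qed

lemma inter_set_eq_set_take_iff:
  assumes "distinct xs"
  shows "(\<exists>m \<le> length xs. A \<inter> set xs = set (take m xs)) \<longleftrightarrow>
    (\<forall>p q. p < q \<longrightarrow> q < length xs \<longrightarrow> xs ! q \<in> A \<longrightarrow> xs ! p \<in> A)"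
proof
  assume "\<exists>m \<le> length xs. A \<inter> set xs = set (take m xs)"
  then obtain m where m: "A \<inter> set xs = set (take m xs)" by blast
  have mem: "xs ! q \<in> A \<longleftrightarrow> q < m" if "q < length xs" for q
    using m nth_mem_set_take_iff[OF assms that] that by (metis Int_iff nth_mem)
  show "\<forall>p q. p < q \<longrightarrow> q < length xs \<longrightarrow> xs ! q \<in> A \<longrightarrow> xs ! p \<in> A"
    using mem by force
next
  assume antitone: "\<forall>p q. p < q \<longrightarrow> q < length xs \<longrightarrow> xs ! q \<in> A \<longrightarrow> xs ! p \<in> A"
  define m where "m = length (takeWhile (\<lambda>a. a \<in> A) xs)"
  have "A \<inter> set xs = set (take m xs)"
  proof (intro equalityI subsetI)
    fix a assume "a \<in> A \<inter> set xs"
    then obtain q where q: "q < length xs" "xs ! q = a" "a \<in> A" by (auto simp: in_set_conv_nth)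
    have "q < m"
    proof (rule ccontr)
      assume "\<not> q < m"
      then have "m < length xs" "xs ! m \<notin> A"
        using q m_def nth_length_takeWhile[of "\<lambda>a. a \<in> A" xs] by auto
      with q antitone \<open>\<not> q < m\<close> show False by (metis nat_neq_iff)
    qed
    then show "a \<in> set (take m xs)" using nth_mem_set_take_iff[OF assms q(1)] q(2) by simp
  next
    fix a assume "a \<in> set (take m xs)"
    then show "a \<in> A \<inter> set xs"
      unfolding m_def takeWhile_eq_take[symmetric] by (auto dest: set_takeWhileD)
  qed
  then show "\<exists>m \<le> length xs. A \<inter> set xs = set (take m xs)"
    unfolding m_def by (metis length_takeWhile_le)
qed

lemma inter_set_eq_set_drop_iff:
  assumes "distinct xs"
  shows "A \<inter> set xs = set (drop m xs) \<longleftrightarrow> - A \<inter> set xs = set (take m xs)"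
proof -
  have "set xs = set (take m xs) \<union> set (drop m xs)"
    by (metis append_take_drop_id set_append)
  moreover have "set (take m xs) \<inter> set (drop m xs) = {}"
    using assms by (rule set_take_disj_set_drop_if_distinct) simp
  ultimately show ?thesis by blast
qed

lemma not_alternating_iff:
  "\<not> alternating A xs \<longleftrightarrow>
     (\<forall>p q. p < q \<longrightarrow> q < length xs \<longrightarrow> xs ! q \<in> A \<longrightarrow> xs ! p \<in> A) \<or>
     (\<forall>p q. p < q \<longrightarrow> q < length xs \<longrightarrow> xs ! q \<in> - A \<longrightarrow> xs ! p \<in> - A)"
proof
  assume "\<not> alternating A xs"
  then show "(\<forall>p q. p < q \<longrightarrow> q < length xs \<longrightarrow> xs ! q \<in> A \<longrightarrow> xs ! p \<in> A) \<or>
     (\<forall>p q. p < q \<longrightarrow> q < length xs \<longrightarrow> xs ! q \<in> - A \<longrightarrow> xs ! p \<in> - A)"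
    unfolding alternating_def Compl_iff by (metis nat_neq_iff)
next
  assume "(\<forall>p q. p < q \<longrightarrow> q < length xs \<longrightarrow> xs ! q \<in> A \<longrightarrow> xs ! p \<in> A) \<or>
     (\<forall>p q. p < q \<longrightarrow> q < length xs \<longrightarrow> xs ! q \<in> - A \<longrightarrow> xs ! p \<in> - A)"
  then show "\<not> alternating A xs"
    unfolding alternating_def Compl_iff by (metis less_trans)
qed

lemma initial_or_final_segment_iff_not_alternating:
  assumes "distinct xs"
  shows "(\<exists>m \<le> length xs. A \<inter> set xs = set (take m xs) \<or> A \<inter> set xs = set (drop m xs))
    \<longleftrightarrow> \<not> alternating A xs"
  unfolding not_alternating_iff inter_set_eq_set_drop_iff[OF assms]
    inter_set_eq_set_take_iff[OF assms, symmetric] inter_set_eq_set_take_iff[OF assms, of "- A", symmetric]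
  by blast

lemma distinct_stick: "i < j \<Longrightarrow> j < k \<Longrightarrow> k < l \<Longrightarrow> distinct (stick i j k l)"
  by (auto simp: stick_def insert_eq_iff doubleton_eq_iff)

lemma set_stick_subset_Lambda:
  "1 \<le> i \<Longrightarrow> i < j \<Longrightarrow> j < k \<Longrightarrow> k < l \<Longrightarrow> l \<le> n \<Longrightarrow> set (stick i j k l) \<subseteq> Lambda n"
  by (auto simp: stick_def Lambda_def)

lemma is_tiling_iff_not_alternating:
  "is_tiling n X \<longleftrightarrow> X \<subseteq> Lambda n \<and>
     (\<forall>i j k l. 1 \<le> i \<and> i < j \<and> j < k \<and> k < l \<and> l \<le> n \<longrightarrow> \<not> alternating X (stick i j k l))"
proof -
  have "length (stick i j k l) = 4" for i j k l by (simp add: stick_def)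
  then show ?thesis
    unfolding is_tiling_def using initial_or_final_segment_iff_not_alternating[OF distinct_stick] by metis
qed

lemma card_disagree_sm_less:
  assumes "finite V" "odd (card V)" "t \<in> Lambda n"
  shows "2 * card {v \<in> V. (t \<in> T v) \<noteq> (t \<in> sm n V T)} < card V"
proof (cases "t \<in> sm n V T")
  case True
  then have "card V < 2 * card {v \<in> V. t \<in> T v}" by (simp add: sm_def)
  moreover have "{v \<in> V. (t \<in> T v) \<noteq> (t \<in> sm n V T)} = V - {v \<in> V. t \<in> T v}" using True by auto
  then have "card {v \<in> V. (t \<in> T v) \<noteq> (t \<in> sm n V T)} = card V - card {v \<in> V. t \<in> T v}"
    using assms(1) by (simp add: card_Diff_subset)
  moreover have "card {v \<in> V. t \<in> T v} \<le> card V" using assms(1) by (simp add: card_mono)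
  ultimately show ?thesis by linarith
next
  case False
  then have "2 * card {v \<in> V. t \<in> T v} \<le> card V" using assms(3) by (simp add: sm_def)
  moreover have "{v \<in> V. (t \<in> T v) \<noteq> (t \<in> sm n V T)} = {v \<in> V. t \<in> T v}" using False by auto
  ultimately show ?thesis using assms(2) by (metis dvd_triv_left le_neq_implies_less)
qed

lemma sm_agrees_with_two_of_three:
  assumes "card V = 3" "t \<in> Lambda n" "u \<in> V" "w \<in> V" "u \<noteq> w"
    "(t \<in> T u) = b" "(t \<in> T w) = b"
  shows "(t \<in> sm n V T) = b"
proof (rule ccontr)
  have "finite V" using assms(1) by (metis card.infinite zero_neq_numeral)
  assume "(t \<in> sm n V T) \<noteq> b"
  then have uw: "{u, w} \<subseteq> {v \<in> V. (t \<in> T v) \<noteq> (t \<in> sm n V T)}" using assms(3-7) by auto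
  have "2 \<le> card {v \<in> V. (t \<in> T v) \<noteq> (t \<in> sm n V T)}"
    using card_mono[OF _ uw] \<open>finite V\<close> assms(5) by simp
  then show False using card_disagree_sm_less[OF \<open>finite V\<close> _ assms(2), of T] assms(1) by simp
qed

lemma sm_subset_Lambda: "sm n V T \<subseteq> Lambda n"
  by (auto simp: sm_def)

definition pairwise_hull :: "'a set \<Rightarrow> 'a set set \<Rightarrow> 'a set set" where
  "pairwise_hull U D =
     {X. \<forall>s\<in>U. \<forall>t\<in>U. \<exists>Y\<in>D. (s \<in> X \<longleftrightarrow> s \<in> Y) \<and> (t \<in> X \<longleftrightarrow> t \<in> Y)}"

lemma subset_pairwise_hull: "D \<subseteq> pairwise_hull U D"
  by (auto simp: pairwise_hull_def)

lemma sm_mem_pairwise_hull: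
  assumes "finite V" "odd (card V)" "\<forall>v\<in>V. T v \<in> pairwise_hull (Lambda n) D"
  shows "sm n V T \<in> pairwise_hull (Lambda n) D"
  unfolding pairwise_hull_def
proof (intro CollectI ballI)
  fix s t assume st: "s \<in> Lambda n" "t \<in> Lambda n"
  let ?disagree = "\<lambda>u. {v \<in> V. (u \<in> T v) \<noteq> (u \<in> sm n V T)}"
  show "\<exists>Y\<in>D. (s \<in> sm n V T \<longleftrightarrow> s \<in> Y) \<and> (t \<in> sm n V T \<longleftrightarrow> t \<in> Y)"
  proof (rule ccontr)
    assume none: "\<not> ?thesis"
    have "V \<subseteq> ?disagree s \<union> ?disagree t"
    proof
      fix v assume "v \<in> V"
      then obtain Y where "Y \<in> D" "s \<in> T v \<longleftrightarrow> s \<in> Y" "t \<in> T v \<longleftrightarrow> t \<in> Y"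
        using assms(3) st unfolding pairwise_hull_def by blast
      with none \<open>v \<in> V\<close> show "v \<in> ?disagree s \<union> ?disagree t" by auto
    qed
    then have "card V \<le> card (?disagree s \<union> ?disagree t)"
      using assms(1) by (intro card_mono) auto
    also have "\<dots> \<le> card (?disagree s) + card (?disagree t)"
      by (rule card_Un_le)
    finally show False
      using card_disagree_sm_less[OF assms(1,2) st(1), of T] card_disagree_sm_less[OF assms(1,2) st(2), of T]
      by linarith
  qed
qed

lemma alternating_sm_three_if_mem_pairwise_hull:
  assumes "set xs \<subseteq> Lambda n" "alternating X xs" "X \<in> pairwise_hull (Lambda n) D"
  shows "\<exists>Y1\<in>D. \<exists>Y2\<in>D. \<exists>Y3\<in>D. alternating (sm n {0, 1, 2 :: nat} (nth [Y1, Y2, Y3])) xs"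
proof -
  obtain x y z where xyz: "x < y" "y < z" "z < length xs"
    and pattern: "(xs ! x \<in> X) = (xs ! z \<in> X)" "(xs ! y \<in> X) \<noteq> (xs ! x \<in> X)"
    using assms(2) unfolding alternating_def by blast
  have in_Lambda: "xs ! q \<in> Lambda n" if "q < length xs" for q
    using assms(1) nth_mem[OF that] by blast
  have agree: "\<exists>Y\<in>D. (xs ! p \<in> X \<longleftrightarrow> xs ! p \<in> Y) \<and> (xs ! q \<in> X \<longleftrightarrow> xs ! q \<in> Y)"
    if "p < length xs" "q < length xs" for p q
    using assms(3) in_Lambda[OF that(1)] in_Lambda[OF that(2)] unfolding pairwise_hull_def by blast
  have "x < length xs" "y < length xs" using xyz by simp_all
  then obtain Y1 Y2 Y3 where Y: "Y1 \<in> D" "Y2 \<in> D" "Y3 \<in> D"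
    and Y1: "xs ! x \<in> X \<longleftrightarrow> xs ! x \<in> Y1" "xs ! y \<in> X \<longleftrightarrow> xs ! y \<in> Y1"
    and Y2: "xs ! x \<in> X \<longleftrightarrow> xs ! x \<in> Y2" "xs ! z \<in> X \<longleftrightarrow> xs ! z \<in> Y2"
    and Y3: "xs ! y \<in> X \<longleftrightarrow> xs ! y \<in> Y3" "xs ! z \<in> X \<longleftrightarrow> xs ! z \<in> Y3"
    using agree[of x y] agree[of x z] agree[of y z] xyz(3) by metis
  define M where "M = sm n {0, 1, 2 :: nat} (nth [Y1, Y2, Y3])"
  have M_agrees: "(xs ! q \<in> M) = (xs ! q \<in> X)"
    if "q < length xs" "u \<in> {0, 1, 2}" "w \<in> {0, 1, 2}" "u \<noteq> w"
      "(xs ! q \<in> [Y1, Y2, Y3] ! u) = (xs ! q \<in> X)" "(xs ! q \<in> [Y1, Y2, Y3] ! w) = (xs ! q \<in> X)"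
    for q u w
    unfolding M_def by (rule sm_agrees_with_two_of_three[OF _ in_Lambda[OF that(1)] that(2-6)]) simp
  have "(xs ! x \<in> M) = (xs ! x \<in> X)" using M_agrees[of x 0 1] Y1 Y2 xyz by simp
  moreover have "(xs ! y \<in> M) = (xs ! y \<in> X)" using M_agrees[of y 0 2] Y1 Y3 xyz by simp
  moreover have "(xs ! z \<in> M) = (xs ! z \<in> X)" using M_agrees[of z 1 2] Y2 Y3 xyz by simp
  ultimately have "alternating M xs" using xyz pattern unfolding alternating_def by blast
  then show ?thesis using Y unfolding M_def by blast
qed

lemma is_tiling_if_mem_pairwise_hull:
  assumes D: "condorcet_super_domain n D" and X: "X \<subseteq> Lambda n" "X \<in> pairwise_hull (Lambda n) D"
  shows "is_tiling n X"
  unfolding is_tiling_iff_not_alternating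
proof (intro conjI allI impI notI)
  show "X \<subseteq> Lambda n" by (rule X(1))
next
  fix i j k l assume ijkl: "1 \<le> i \<and> i < j \<and> j < k \<and> k < l \<and> l \<le> n"
  assume "alternating X (stick i j k l)"
  then obtain Y1 Y2 Y3 where Y: "Y1 \<in> D" "Y2 \<in> D" "Y3 \<in> D"
    and alt: "alternating (sm n {0, 1, 2 :: nat} (nth [Y1, Y2, Y3])) (stick i j k l)"
    using alternating_sm_three_if_mem_pairwise_hull set_stick_subset_Lambda ijkl X(2) by metis
  have "\<forall>v\<in>{0, 1, 2}. [Y1, Y2, Y3] ! v \<in> D" using Y by simp
  then have "is_tiling n (sm n {0, 1, 2 :: nat} (nth [Y1, Y2, Y3]))"
    using D unfolding condorcet_super_domain_def by simp
  then show False using alt ijkl unfolding is_tiling_iff_not_alternating by blast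
qed

lemma condorcet_super_domain_pairwise_hull:
  assumes "condorcet_super_domain n D"
  shows "condorcet_super_domain n (pairwise_hull (Lambda n) D \<inter> Pow (Lambda n))"
  unfolding condorcet_super_domain_def
proof (intro conjI allI impI subsetI CollectI)
  show "is_tiling n X" if "X \<in> pairwise_hull (Lambda n) D \<inter> Pow (Lambda n)" for X
    using is_tiling_if_mem_pairwise_hull[OF assms] that by blast
  fix V :: "nat set" and T
  assume "finite V \<and> odd (card V) \<and> (\<forall>v\<in>V. T v \<in> pairwise_hull (Lambda n) D \<inter> Pow (Lambda n))"
  then have "sm n V T \<in> pairwise_hull (Lambda n) D" by (intro sm_mem_pairwise_hull) auto
  then show "is_tiling n (sm n V T)" by (rule is_tiling_if_mem_pairwise_hull[OF assms sm_subset_Lambda])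
qed

lemma condorcet_super_domain_subset:
  "condorcet_super_domain n D' \<Longrightarrow> D \<subseteq> D' \<Longrightarrow> condorcet_super_domain n D"
  unfolding condorcet_super_domain_def by blast

theorem mainTheorem7:
  fixes n :: nat and D :: "nat set set set" and V :: "'v set" and T :: "'v \<Rightarrow> nat set set"
  assumes "n \<ge> 3"
    and "condorcet_super_domain n D"
    and "finite V" and "odd (card V)"
    and "\<forall>v\<in>V. T v \<in> D"
  shows "condorcet_super_domain n (D \<union> {sm n V T})"
proof -
  let ?H = "pairwise_hull (Lambda n) D \<inter> Pow (Lambda n)"
  have "D \<subseteq> Pow (Lambda n)"
    using assms(2) unfolding condorcet_super_domain_def is_tiling_def by blast
  then have "D \<subseteq> ?H" using subset_pairwise_hull by blast
  moreover have "sm n V T \<in> pairwise_hull (Lambda n) D"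
    using assms(5) subset_pairwise_hull by (intro sm_mem_pairwise_hull[OF assms(3,4)]) blast
  ultimately have "D \<union> {sm n V T} \<subseteq> ?H" using sm_subset_Lambda by blast
  then show ?thesis
    by (rule condorcet_super_domain_subset[OF condorcet_super_domain_pairwise_hull[OF assms(2)]])
qed

end
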